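(* Let $X_1,\dots,X_n$ be i.i.d. with c.d.f. $F$, mean $\mu$ and finite standard deviation $\sigma$. Let $k\in\mathbb{N}$ with $k<n/2$, and let $v>0$ be such that \[\frac e6\,\rho_{F,2}\left(\frac{1}{36v^2}\frac kn\right)\leq v.\] Then \[\Pr\left(\Delta_{n,k}>12v\,\sigma\sqrt{\frac nk}\right)\leq e^{-k}.\]
   Context: With order statistics $X_{(1)}\le\dots\le X_{(n)}$, $\Delta_{n,k}:=X_{(n-k+1)}-X_{(k)}$. For $\xi>0$, $\rho_{F,2}(\xi):=\sup\{(\mathbb{E}[|X_1-\mu|^2Z])^{1/2}/\sigma: 0\le Z\le1 \text{ a random variable (jointly defined with } X_1), \mathbb{E}Z\le\xi\}$ if $\sigma>0$, and $0$ if $\sigma=0$. *)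

theory Defs
  imports "HOL-Probability.Probability"
begin

definition dist_mean :: "real measure \<Rightarrow> real" where
  "dist_mean F = (\<integral>x. x \<partial>F)"

definition dist_sd :: "real measure \<Rightarrow> real" where
  "dist_sd F = sqrt (\<integral>x. (x - dist_mean F)\<^sup>2 \<partial>F)"

text \<open>rho_{F,2}(xi): supremum over all joint laws N of a pair (X_1, Z) with
  X_1 ~ F, 0 <= Z <= 1 and E Z <= xi, of sqrt(E[|X_1 - mu|^2 Z]) / sigma;
  it is 0 if sigma = 0.\<close>
definition rho2 :: "real measure \<Rightarrow> real \<Rightarrow> real" where
  "rho2 F \<xi> = (if dist_sd F = 0 then 0 else
     Sup { sqrt (\<integral>p. \<bar>fst p - dist_mean F\<bar>\<^sup>2 * snd p \<partial>N) / dist_sd F | N.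
             prob_space N \<and> sets N = sets (borel :: (real \<times> real) measure) \<and>
             distr N borel fst = F \<and>
             (AE p in N. 0 \<le> snd p \<and> snd p \<le> 1) \<and>
             (\<integral>p. snd p \<partial>N) \<le> \<xi> })"

text \<open>Order statistics: X_(j) (1-based) of the sample [X 0 w, ..., X (n-1) w].\<close>
definition order_stat :: "(nat \<Rightarrow> 'a \<Rightarrow> real) \<Rightarrow> nat \<Rightarrow> nat \<Rightarrow> 'a \<Rightarrow> real" where
  "order_stat X n j \<omega> = sort (map (\<lambda>i. X i \<omega>) [0..<n]) ! (j - 1)"

definition Delta :: "(nat \<Rightarrow> 'a \<Rightarrow> real) \<Rightarrow> nat \<Rightarrow> nat \<Rightarrow> 'a \<Rightarrow> real" where
  "Delta X n k \<omega> = order_stat X n (n - k + 1) \<omega> - order_stat X n k \<omega>"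

end

theory Submission
  imports Defs
begin

(*
  If Delta_{n,k} > 2s, then at least k sample points lie farther than s from the mean:
  either the k smallest lie below mu - s, or the k largest lie above mu + s.  By
  independence and a union bound over the k-subsets of the sample, this has probability
  at most C(n,k) p^k <= (e n p / k)^k, where p = P(|X_1 - mu| > s).

  For s = 6 v sigma sqrt(n/k), Chebyshev gives p <= sigma^2 / s^2 = k / (36 v^2 n), so the
  indicator Z of the tail event is admissible in the definition of rho_{F,2}; together with
  E[|X_1 - mu|^2 Z] >= s^2 p this yields s sqrt p <= sigma rho_{F,2} <= 6 v sigma / e,
  i.e. n p <= k / e^2, and hence the bound e^{-k}.
*)

lemma power_div_fact_le_exp:
  fixes x :: real
  assumes "0 \<le> x"
  shows "x ^ k / fact k \<le> exp x"
proof -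
  have "(\<Sum>i\<in>{k}. x ^ i / fact i) \<le> (\<Sum>i. x ^ i / fact i)"
    using assms summable_exp[of x] by (intro sum_le_suminf) (auto simp: divide_inverse ac_simps)
  then show ?thesis by (simp add: exp_def divide_inverse ac_simps)
qed

lemma binomial_le_exp_mult_pow: "real (n choose k) \<le> (exp 1 * real n / real k) ^ k"
proof (cases "k = 0")
  case False
  have "real (n choose k) * fact k \<le> real n ^ k"
    by (metis binomial_fact_pow of_nat_fact of_nat_le_iff of_nat_mult of_nat_power)
  then have "real (n choose k) \<le> real n ^ k / fact k"
    by (simp add: field_simps)
  also have "\<dots> = real n ^ k / real k ^ k * (real k ^ k / fact k)"
    using False by simp
  also have "\<dots> \<le> real n ^ k / real k ^ k * exp (real k)"
    by (intro mult_left_mono power_div_fact_le_exp) auto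
  also have "\<dots> = (exp 1 * real n / real k) ^ k"
    by (simp add: power_mult_distrib power_divide exp_of_nat_mult[symmetric])
  finally show ?thesis .
qed simp

lemma binomial_mult_pow_le_exp_neg:
  fixes q :: real
  assumes "0 \<le> q" and "real n * q \<le> real k / exp 2"
  shows "real (n choose k) * q ^ k \<le> exp (- real k)"
proof -
  have "real (n choose k) * q ^ k \<le> (exp 1 * real n / real k) ^ k * q ^ k"
    using assms(1) by (intro mult_right_mono binomial_le_exp_mult_pow) auto
  also have "\<dots> = (exp 1 * (real n * q) / real k) ^ k"
    by (simp add: power_mult_distrib power_divide)
  also have "\<dots> \<le> (exp 1 * (real k / exp 2) / real k) ^ k"
    using assms by (intro power_mono divide_right_mono mult_left_mono) auto
  also have "\<dots> \<le> exp (- 1) ^ k"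
    by (cases "k = 0") (simp_all add: exp_diff[symmetric])
  also have "\<dots> = exp (- real k)"
    by (simp add: exp_of_nat_mult[symmetric])
  finally show ?thesis .
qed

lemma at_least_k_events_eq_UN_subsets:
  assumes "finite I" and "0 < k" and "\<And>i. i \<in> I \<Longrightarrow> E i \<subseteq> \<Omega>"
  shows "{\<omega> \<in> \<Omega>. k \<le> card {i \<in> I. \<omega> \<in> E i}} = (\<Union>S\<in>{S. S \<subseteq> I \<and> card S = k}. \<Inter>i\<in>S. E i)"
proof (intro equalityI subsetI)
  fix \<omega> assume "\<omega> \<in> {\<omega> \<in> \<Omega>. k \<le> card {i \<in> I. \<omega> \<in> E i}}"
  then have "k \<le> card {i \<in> I. \<omega> \<in> E i}"
    by simp
  then obtain S where S: "S \<subseteq> {i \<in> I. \<omega> \<in> E i}" "card S = k"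
    by (rule obtain_subset_with_card_n)
  then have "S \<in> {S. S \<subseteq> I \<and> card S = k}" "\<omega> \<in> (\<Inter>i\<in>S. E i)"
    by auto
  then show "\<omega> \<in> (\<Union>S\<in>{S. S \<subseteq> I \<and> card S = k}. \<Inter>i\<in>S. E i)"
    by (rule UN_I)
next
  fix \<omega> assume "\<omega> \<in> (\<Union>S\<in>{S. S \<subseteq> I \<and> card S = k}. \<Inter>i\<in>S. E i)"
  then obtain S where S: "S \<subseteq> I" "card S = k" "\<forall>i\<in>S. \<omega> \<in> E i"
    by blast
  obtain i where "i \<in> S"
    using S(2) assms(2) by (metis card.empty ex_in_conv less_irrefl)
  then have "\<omega> \<in> \<Omega>"
    using S assms(3) by blast
  moreover have "card S \<le> card {i \<in> I. \<omega> \<in> E i}"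
    by (rule card_mono) (use S assms(1) in auto)
  ultimately show "\<omega> \<in> {\<omega> \<in> \<Omega>. k \<le> card {i \<in> I. \<omega> \<in> E i}}"
    using S(2) by simp
qed

lemma sets_at_least_k_events:
  assumes "finite I" and "\<And>i. i \<in> I \<Longrightarrow> E i \<in> sets M"
  shows "{\<omega> \<in> space M. k \<le> card {i \<in> I. \<omega> \<in> E i}} \<in> sets M"
proof (cases "k = 0")
  case False
  let ?SS = "{S. S \<subseteq> I \<and> card S = k}"
  have "finite ?SS"
    using assms(1) by (intro finite_Collect_conjI disjI1 finite_Collect_subsets)
  moreover have "(\<Inter>i\<in>S. E i) \<in> sets M" if "S \<in> ?SS" for S
  proof (rule sets.finite_INT)
    show "finite S" "S \<noteq> {}"
      using that False finite_subset[OF _ assms(1)] by auto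
  qed (use that assms(2) in auto)
  ultimately have UN: "(\<Union>S\<in>?SS. \<Inter>i\<in>S. E i) \<in> sets M"
    by (intro sets.finite_UN) auto
  have eq: "{\<omega> \<in> space M. k \<le> card {i \<in> I. \<omega> \<in> E i}} = (\<Union>S\<in>?SS. \<Inter>i\<in>S. E i)"
    by (rule at_least_k_events_eq_UN_subsets)
      (use False assms(1) sets.sets_into_space[OF assms(2)] in auto)
  show ?thesis
    unfolding eq by (rule UN)
qed simp

lemma (in prob_space) prob_at_least_k_indep_events_le:
  assumes indep: "indep_events E I" and "finite I" and p: "\<And>i. i \<in> I \<Longrightarrow> prob (E i) = p"
  shows "prob {\<omega> \<in> space M. k \<le> card {i \<in> I. \<omega> \<in> E i}} \<le> real (card I choose k) * p ^ k"
proof (cases "k = 0")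
  case False
  define SS where "SS = {S. S \<subseteq> I \<and> card S = k}"
  have E: "E i \<in> events" if "i \<in> I" for i
    using indep that by (simp add: indep_events_def image_subset_iff)
  have finite_SS: "finite SS"
    unfolding SS_def using \<open>finite I\<close> by (intro finite_Collect_conjI disjI1 finite_Collect_subsets)
  have S: "S \<noteq> {}" "finite S" "S \<subseteq> I" if "S \<in> SS" for S
    using that False \<open>finite I\<close> by (auto simp: SS_def intro: finite_subset)
  have INT_events: "(\<Inter>i\<in>S. E i) \<in> events" if "S \<in> SS" for S
    using S[OF that] E by (intro sets.finite_INT) auto
  have "prob {\<omega> \<in> space M. k \<le> card {i \<in> I. \<omega> \<in> E i}} = prob (\<Union>S\<in>SS. \<Inter>i\<in>S. E i)"
    unfolding SS_def
    by (rule arg_cong[where f = prob], rule at_least_k_events_eq_UN_subsets)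
      (use False \<open>finite I\<close> sets.sets_into_space[OF E] in auto)
  also have "\<dots> \<le> (\<Sum>S\<in>SS. prob (\<Inter>i\<in>S. E i))"
    using INT_events finite_SS by (intro finite_measure_subadditive_finite) auto
  also have "\<dots> = (\<Sum>S\<in>SS. p ^ k)"
  proof (rule sum.cong)
    fix S assume "S \<in> SS"
    have "prob (\<Inter>i\<in>S. E i) = (\<Prod>i\<in>S. prob (E i))"
      by (rule indep[unfolded indep_events_def, THEN conjunct2, rule_format])
        (use S[OF \<open>S \<in> SS\<close>] in auto)
    also have "\<dots> = (\<Prod>i\<in>S. p)"
      using S[OF \<open>S \<in> SS\<close>] p by (intro prod.cong) auto
    also have "\<dots> = p ^ k"
      using \<open>S \<in> SS\<close> by (simp add: SS_def)
    finally show "prob (\<Inter>i\<in>S. E i) = p ^ k" .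
  qed simp
  also have "\<dots> = real (card I choose k) * p ^ k"
    using n_subsets[OF \<open>finite I\<close>, of k] by (simp add: SS_def)
  finally show ?thesis .
qed simp

lemma Delta_gt_imp_card_far_ge:
  fixes X :: "nat \<Rightarrow> 'a \<Rightarrow> real"
  assumes "1 \<le> k" "k \<le> n" and "2 * s < Delta X n k \<omega>"
  shows "k \<le> card {i. i < n \<and> s < \<bar>X i \<omega> - c\<bar>}"
proof -
  define xs where "xs = map (\<lambda>i. X i \<omega>) [0..<n]"
  define ys where "ys = sort xs"
  define far where "far = (\<lambda>x::real. s < \<bar>x - c\<bar>)"
  have len: "length ys = n" and sorted: "sorted ys"
    by (simp_all add: ys_def xs_def)
  have gap: "ys ! (k - 1) + 2 * s < ys ! (n - k)"
    using assms by (simp add: Delta_def order_stat_def ys_def xs_def)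
  have "k \<le> card {j. j < length ys \<and> far (ys ! j)}"
  proof (cases "ys ! (k - 1) < c - s")
    case True
    have "{..<k} \<subseteq> {j. j < length ys \<and> far (ys ! j)}"
    proof
      fix j assume "j \<in> {..<k}"
      then have "ys ! j \<le> ys ! (k - 1)" "j < n"
        using sorted_nth_mono[OF sorted, of j "k - 1"] assms len by auto
      then show "j \<in> {j. j < length ys \<and> far (ys ! j)}"
        using True len by (auto simp: far_def)
    qed
    then show ?thesis by (metis card_lessThan card_mono finite_Collect_conjI finite_Collect_less_nat)
  next
    case False
    have "{n - k..<n} \<subseteq> {j. j < length ys \<and> far (ys ! j)}"
    proof
      fix j assume "j \<in> {n - k..<n}"
      then have "ys ! (n - k) \<le> ys ! j" "j < n"
        using sorted_nth_mono[OF sorted, of "n - k" j] len by auto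
      then show "j \<in> {j. j < length ys \<and> far (ys ! j)}"
        using False gap len by (auto simp: far_def)
    qed
    then show ?thesis
      using card_mono[of "{j. j < length ys \<and> far (ys ! j)}" "{n - k..<n}"] assms by auto
  qed
  also have "\<dots> = length (filter far xs)"
    by (metis length_filter_conv_card mset_filter mset_sort size_mset ys_def)
  also have "\<dots> = card {i. i < n \<and> far (X i \<omega>)}"
    unfolding length_filter_conv_card xs_def by (rule arg_cong[where f = card]) auto
  finally show ?thesis by (simp add: far_def)
qed

lemma (in prob_space) prob_Delta_gt_le:
  fixes X :: "nat \<Rightarrow> 'a \<Rightarrow> real"
  assumes indep: "indep_vars (\<lambda>_. borel) X {..<n}"
    and ident: "\<And>i. i < n \<Longrightarrow> distr M borel (X i) = F" and "1 \<le> k" "k \<le> n"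
  shows "prob {\<omega> \<in> space M. 2 * s < Delta X n k \<omega>} \<le> real (n choose k) * measure F {x. s < \<bar>x - c\<bar>} ^ k"
proof -
  define A where "A = {x. s < \<bar>x - c\<bar>}"
  define E where "E i = {\<omega> \<in> space M. X i \<omega> \<in> A}" for i
  have A: "A \<in> sets borel"
    unfolding A_def by measurable
  have X: "X i \<in> borel_measurable M" if "i < n" for i
    using indep that by (simp add: indep_vars_def)
  have E: "E i \<in> events" if "i < n" for i
    using X[OF that] A unfolding E_def by measurable
  have "{\<omega> \<in> space M. 2 * s < Delta X n k \<omega>} \<subseteq> {\<omega> \<in> space M. k \<le> card {i \<in> {..<n}. \<omega> \<in> E i}}"
  proof (intro subsetI)
    fix \<omega> assume "\<omega> \<in> {\<omega> \<in> space M. 2 * s < Delta X n k \<omega>}"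
    then have "\<omega> \<in> space M" and "k \<le> card {i. i < n \<and> s < \<bar>X i \<omega> - c\<bar>}"
      using assms(3,4) Delta_gt_imp_card_far_ge by auto
    then show "\<omega> \<in> {\<omega> \<in> space M. k \<le> card {i \<in> {..<n}. \<omega> \<in> E i}}"
      by (simp add: E_def A_def)
  qed
  then have "prob {\<omega> \<in> space M. 2 * s < Delta X n k \<omega>} \<le> prob {\<omega> \<in> space M. k \<le> card {i \<in> {..<n}. \<omega> \<in> E i}}"
    by (intro finite_measure_mono sets_at_least_k_events) (simp_all add: E)
  also have "\<dots> \<le> real (card {..<n} choose k) * measure F A ^ k"
  proof (rule prob_at_least_k_indep_events_le)
    show "indep_events E {..<n}"
      unfolding E_def using indep_eventsI_indep_vars[OF indep, of "\<lambda>_ x. x \<in> A"] A by simp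
    show "prob (E i) = measure F A" if "i \<in> {..<n}" for i
      using that measure_distr[OF X A, of i] ident[of i]
      by (simp add: E_def vimage_def Int_def conj_commute)
  qed simp
  finally show ?thesis
    by (simp add: A_def)
qed

lemma dist_sd_nonneg: "0 \<le> dist_sd F"
  unfolding dist_sd_def by simp

lemma dist_sd_squared: "dist_sd F ^ 2 = (\<integral>x. (x - dist_mean F)\<^sup>2 \<partial>F)"
  unfolding dist_sd_def by (simp add: integral_nonneg_AE)

lemma borel_measurable_fst_borel [measurable]:
  "fst \<in> borel_measurable (borel :: ('a::topological_space \<times> 'b::topological_space) measure)"
  by (intro borel_measurable_continuous_onI continuous_intros)

lemma borel_measurable_snd_borel [measurable]:
  "snd \<in> borel_measurable (borel :: ('a::topological_space \<times> 'b::topological_space) measure)"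
  by (intro borel_measurable_continuous_onI continuous_intros)

context real_distribution
begin

lemma integrable_square_diff:
  assumes "integrable M (\<lambda>x. x\<^sup>2)"
  shows "integrable M (\<lambda>x. (x - c)\<^sup>2)"
proof -
  have "integrable M (\<lambda>x. x)"
    using assms by (rule square_integrable_imp_integrable[rotated]) measurable
  then show ?thesis
    using assms by (simp add: power2_diff)
qed

lemma measure_abs_diff_dist_mean_gt_le:
  assumes "integrable M (\<lambda>x. x\<^sup>2)" and "0 < s"
  shows "measure M {x. s < \<bar>x - dist_mean M\<bar>} \<le> dist_sd M ^ 2 / s\<^sup>2"
proof -
  have "measure M {x. s < \<bar>x - dist_mean M\<bar>} \<le> prob {x \<in> space M. s \<le> \<bar>x - expectation (\<lambda>x. x)\<bar>}"
    by (intro finite_measure_mono) (auto simp: dist_mean_def)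
  also have "\<dots> \<le> variance (\<lambda>x. x) / s\<^sup>2"
    using assms by (intro Chebyshev_inequality) auto
  also have "\<dots> = dist_sd M ^ 2 / s\<^sup>2"
    by (simp add: dist_sd_squared dist_mean_def)
  finally show ?thesis .
qed

lemma AE_eq_dist_mean:
  assumes "integrable M (\<lambda>x. x\<^sup>2)" and "dist_sd M = 0"
  shows "AE x in M. x = dist_mean M"
proof -
  have "(\<integral>x. (x - dist_mean M)\<^sup>2 \<partial>M) = 0"
    using assms(2) by (simp flip: dist_sd_squared)
  then have "AE x in M. (x - dist_mean M)\<^sup>2 = 0"
    using integral_nonneg_eq_0_iff_AE[OF integrable_square_diff[OF assms(1)]] by simp
  then show ?thesis
    by eventually_elim simp
qed

lemma rho2_ge_coupling:
  fixes N :: "(real \<times> real) measure"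
  assumes "integrable M (\<lambda>x. x\<^sup>2)"
    and N: "prob_space N" "sets N = sets borel" "distr N borel fst = M"
      "AE p in N. 0 \<le> snd p \<and> snd p \<le> 1" "(\<integral>p. snd p \<partial>N) \<le> \<xi>"
  shows "sqrt (\<integral>p. \<bar>fst p - dist_mean M\<bar>\<^sup>2 * snd p \<partial>N) / dist_sd M \<le> rho2 M \<xi>"
proof (cases "dist_sd M = 0")
  case True
  then show ?thesis
    by (simp add: rho2_def)
next
  case False
  let ?S = "{sqrt (\<integral>p. \<bar>fst p - dist_mean M\<bar>\<^sup>2 * snd p \<partial>N) / dist_sd M | N.
             prob_space N \<and> sets N = sets (borel :: (real \<times> real) measure) \<and>
             distr N borel fst = M \<and>
             (AE p in N. 0 \<le> snd p \<and> snd p \<le> 1) \<and>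
             (\<integral>p. snd p \<partial>N) \<le> \<xi>}"
  have "bdd_above ?S"
  proof (rule bdd_aboveI)
    fix y assume "y \<in> ?S"
    then obtain N' :: "(real \<times> real) measure" where
      N': "sets N' = sets borel" "distr N' borel fst = M" "AE p in N'. 0 \<le> snd p \<and> snd p \<le> 1"
      and y: "y = sqrt (\<integral>p. \<bar>fst p - dist_mean M\<bar>\<^sup>2 * snd p \<partial>N') / dist_sd M"
      by blast
    have fst_N': "fst \<in> measurable N' borel"
      by (subst measurable_cong_sets[OF N'(1) refl]) simp
    have "integrable N' (\<lambda>p. (fst p - dist_mean M)\<^sup>2)"
      using integrable_square_diff[OF assms(1)] N'(2)
        integrable_distr_eq[OF fst_N', of "\<lambda>x. (x - dist_mean M)\<^sup>2"] by simp
    then have "(\<integral>p. \<bar>fst p - dist_mean M\<bar>\<^sup>2 * snd p \<partial>N') \<le> (\<integral>p. (fst p - dist_mean M)\<^sup>2 \<partial>N')"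
      using N'(3) by (intro integral_mono_AE') (auto elim!: AE_mp intro!: mult_left_le)
    also have "\<dots> = (\<integral>x. (x - dist_mean M)\<^sup>2 \<partial>M)"
      using N'(2) integral_distr[OF fst_N', of "\<lambda>x. (x - dist_mean M)\<^sup>2"] by simp
    also have "\<dots> = dist_sd M ^ 2"
      by (rule dist_sd_squared[symmetric])
    finally have "sqrt (\<integral>p. \<bar>fst p - dist_mean M\<bar>\<^sup>2 * snd p \<partial>N') \<le> sqrt (dist_sd M ^ 2)"
      by (rule real_sqrt_le_mono)
    then show "y \<le> 1"
      using False dist_sd_nonneg[of M] unfolding y by simp
  qed
  moreover have "sqrt (\<integral>p. \<bar>fst p - dist_mean M\<bar>\<^sup>2 * snd p \<partial>N) / dist_sd M \<in> ?S"
    using N by blast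
  moreover have "rho2 M \<xi> = Sup ?S"
    using False by (simp add: rho2_def)
  ultimately show ?thesis
    by (simp add: cSup_upper)
qed

lemma rho2_ge_indicator:
  assumes "integrable M (\<lambda>x. x\<^sup>2)" and A: "A \<in> sets borel" and "measure M A \<le> \<xi>"
  shows "sqrt (\<integral>x. (x - dist_mean M)\<^sup>2 * indicator A x \<partial>M) / dist_sd M \<le> rho2 M \<xi>"
proof -
  define g where "g x = (x, indicator A x :: real)" for x :: real
  have g[measurable]: "g \<in> borel_measurable M"
    unfolding g_def using A by measurable
  define N where "N = distr M borel g"
  have "sqrt (\<integral>p. \<bar>fst p - dist_mean M\<bar>\<^sup>2 * snd p \<partial>N) / dist_sd M \<le> rho2 M \<xi>"
  proof (rule rho2_ge_coupling[OF assms(1)])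
    show "prob_space N"
      unfolding N_def by (rule prob_space_distr[OF g])
    show "sets N = sets borel"
      by (simp add: N_def)
    show "distr N borel fst = M"
      unfolding N_def by (subst distr_distr) (auto simp: comp_def g_def distr_id2[of borel M])
    have "{p :: real \<times> real. 0 \<le> snd p \<and> snd p \<le> 1} \<in> sets borel"
      by measurable
    then show "AE p in N. 0 \<le> snd p \<and> snd p \<le> 1"
      unfolding N_def by (subst AE_distr_iff[OF g]) (auto simp: g_def)
    show "(\<integral>p. snd p \<partial>N) \<le> \<xi>"
      unfolding N_def using assms(3) A by (subst integral_distr[OF g]) (auto simp: g_def)
  qed
  moreover have "(\<integral>p. \<bar>fst p - dist_mean M\<bar>\<^sup>2 * snd p \<partial>N) = (\<integral>x. (x - dist_mean M)\<^sup>2 * indicator A x \<partial>M)"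
    unfolding N_def by (subst integral_distr[OF g]) (auto simp: g_def)
  ultimately show ?thesis
    by simp
qed

lemma square_mult_measure_tail_le:
  assumes "integrable M (\<lambda>x. x\<^sup>2)" and "0 \<le> s"
  shows "s\<^sup>2 * measure M {x. s < \<bar>x - c\<bar>} \<le> (\<integral>x. (x - c)\<^sup>2 * indicator {x. s < \<bar>x - c\<bar>} x \<partial>M)"
proof -
  let ?A = "{x. s < \<bar>x - c\<bar>}"
  have A: "?A \<in> sets M"
    by measurable
  have "s\<^sup>2 * measure M ?A = (\<integral>x. s\<^sup>2 * indicator ?A x \<partial>M)"
    using A by simp
  also have "\<dots> \<le> (\<integral>x. (x - c)\<^sup>2 * indicator ?A x \<partial>M)"
  proof (rule integral_mono)
    show "integrable M (\<lambda>x. s\<^sup>2 * indicator ?A x)"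
      using A by (intro integrable_mult_right integrable_real_indicator) (auto simp: emeasure_eq_measure)
    show "integrable M (\<lambda>x. (x - c)\<^sup>2 * indicator ?A x)"
      by (rule integrable_real_mult_indicator[OF A integrable_square_diff[OF assms(1)]])
    fix x
    show "s\<^sup>2 * indicator ?A x \<le> (x - c)\<^sup>2 * indicator ?A x"
      using assms(2) by (cases "x \<in> ?A") (auto simp: abs_le_square_iff[symmetric])
  qed
  finally show ?thesis .
qed

lemma mult_sqrt_measure_tail_le_rho2:
  assumes "integrable M (\<lambda>x. x\<^sup>2)" and "0 < s" and "dist_sd M ^ 2 \<le> \<xi> * s\<^sup>2"
  shows "s * sqrt (measure M {x. s < \<bar>x - dist_mean M\<bar>}) \<le> dist_sd M * rho2 M \<xi>"
proof -
  let ?A = "{x. s < \<bar>x - dist_mean M\<bar>}"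
  have Chebyshev: "measure M ?A \<le> dist_sd M ^ 2 / s\<^sup>2"
    using assms(1,2) by (rule measure_abs_diff_dist_mean_gt_le)
  show ?thesis
  proof (cases "dist_sd M = 0")
    case True
    then show ?thesis
      using Chebyshev measure_nonneg[of M ?A] by simp
  next
    case False
    have "dist_sd M ^ 2 / s\<^sup>2 \<le> \<xi>"
      using assms(2,3) by (simp add: divide_le_eq)
    with Chebyshev have "measure M ?A \<le> \<xi>"
      by linarith
    then have rho: "sqrt (\<integral>x. (x - dist_mean M)\<^sup>2 * indicator ?A x \<partial>M) / dist_sd M \<le> rho2 M \<xi>"
      by (intro rho2_ge_indicator assms(1)) measurable
    have "s * sqrt (measure M ?A) = sqrt (s\<^sup>2 * measure M ?A)"
      using assms(2) by (simp add: real_sqrt_mult)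
    also have "\<dots> \<le> sqrt (\<integral>x. (x - dist_mean M)\<^sup>2 * indicator ?A x \<partial>M)"
      using square_mult_measure_tail_le[OF assms(1)] assms(2) by simp
    also have "\<dots> \<le> dist_sd M * rho2 M \<xi>"
      using rho False dist_sd_nonneg[of M] by (simp add: divide_le_eq mult.commute)
    finally show ?thesis .
  qed
qed

lemma measure_tail_le_of_rho2:
  fixes n k v :: real
  assumes "integrable M (\<lambda>x. x\<^sup>2)" and "0 < n" "0 < k" "0 < v"
    and rho: "exp 1 / 6 * rho2 M (1 / (36 * v\<^sup>2) * (k / n)) \<le> v"
  shows "n * measure M {x. 6 * v * dist_sd M * sqrt (n / k) < \<bar>x - dist_mean M\<bar>} \<le> k / exp 2"
proof -
  define \<sigma> where "\<sigma> = dist_sd M"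
  define s where "s = 6 * v * \<sigma> * sqrt (n / k)"
  define p where "p = measure M {x. s < \<bar>x - dist_mean M\<bar>}"
  have "n * p / k \<le> 1 / exp 2"
  proof (cases "\<sigma> = 0")
    case True
    have "AE x in M. x \<notin> {x. s < \<bar>x - dist_mean M\<bar>}"
      using AE_eq_dist_mean[OF assms(1) True[unfolded \<sigma>_def]]
      by eventually_elim (simp add: s_def True)
    then have "p = 0"
      unfolding p_def by (subst prob_eq_0) measurable
    then show ?thesis
      by simp
  next
    case False
    then have "0 < \<sigma>" "0 < s"
      using assms dist_sd_nonneg[of M] by (auto simp: \<sigma>_def s_def)
    have "\<sigma>\<^sup>2 = 1 / (36 * v\<^sup>2) * (k / n) * s\<^sup>2"
      using assms by (simp add: s_def power_mult_distrib)
    then have "s * sqrt p \<le> \<sigma> * rho2 M (1 / (36 * v\<^sup>2) * (k / n))"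
      unfolding p_def \<sigma>_def using assms(1) \<open>0 < s\<close> by (intro mult_sqrt_measure_tail_le_rho2) auto
    also have "\<dots> \<le> \<sigma> * (6 * v / exp 1)"
      using rho \<open>0 < \<sigma>\<close> by (intro mult_left_mono) (auto simp: field_simps)
    finally have "sqrt (n / k) * sqrt p \<le> 1 / exp 1"
      using \<open>0 < \<sigma>\<close> assms by (simp add: s_def field_simps)
    then have "sqrt (n * p / k) \<le> 1 / exp 1"
      by (simp add: real_sqrt_mult[symmetric])
    then have "n * p / k \<le> (1 / exp 1)\<^sup>2"
      by (rule sqrt_le_D)
    then show ?thesis
      by (simp add: power_divide power2_eq_square exp_add[symmetric])
  qed
  then show ?thesis
    using assms by (simp add: p_def s_def \<sigma>_def field_simps)
qed

end

theorem corollary4p6: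
  fixes M :: "'a measure" and X :: "nat \<Rightarrow> 'a \<Rightarrow> real" and F :: "real measure"
    and n k :: nat and v :: real
  assumes "prob_space M"
    and "\<And>i. i < n \<Longrightarrow> X i \<in> borel_measurable M"
    and indep: "prob_space.indep_vars M (\<lambda>_. borel) X {..<n}"
    and ident: "\<And>i. i < n \<Longrightarrow> distr M borel (X i) = F"
    and finvar: "integrable F (\<lambda>x. x\<^sup>2)"
    and k: "1 \<le> k" "2 * k < n"
    and v: "v > 0"
    and rho: "exp 1 / 6 * rho2 F (1 / (36 * v\<^sup>2) * (real k / real n)) \<le> v"
  shows "measure M {\<omega> \<in> space M.
           Delta X n k \<omega> > 12 * v * dist_sd F * sqrt (real n / real k)} \<le> exp (- real k)"
proof -
  interpret M: prob_space M by fact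
  have "0 < n"
    using k by simp
  interpret F: real_distribution F
    using M.real_distribution_distr[OF assms(2)[OF \<open>0 < n\<close>]] ident[OF \<open>0 < n\<close>] by simp
  define s where "s = 6 * v * dist_sd F * sqrt (real n / real k)"
  have "measure M {\<omega> \<in> space M. Delta X n k \<omega> > 12 * v * dist_sd F * sqrt (real n / real k)}
      = M.prob {\<omega> \<in> space M. 2 * s < Delta X n k \<omega>}"
    by (simp add: s_def mult.assoc)
  also have "\<dots> \<le> real (n choose k) * measure F {x. s < \<bar>x - dist_mean F\<bar>} ^ k"
    using indep ident k by (intro M.prob_Delta_gt_le) simp_all
  also have "\<dots> \<le> exp (- real k)"
  proof (rule binomial_mult_pow_le_exp_neg)
    show "real n * measure F {x. s < \<bar>x - dist_mean F\<bar>} \<le> real k / exp 2"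
      unfolding s_def using F.measure_tail_le_of_rho2[OF finvar _ _ v] rho \<open>0 < n\<close> k by simp
  qed simp
  finally show ?thesis .
qed

end
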